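(* Let $x \in (0,1)$ have regular continued fraction expansion $x = [x_1,x_2,x_3,\ldots]$. Then for each $j \ge 1$, \[ R^{x_2+x_4+\cdots+x_{2j}}(x) = [x_{2j+1}+1, x_{2j+2}, x_{2j+3},\ldots], \] and if $0 < \ell < x_{2j}$, then \[ R^{x_2+x_4+\cdots+x_{2j-2}+\ell}(x) = [1, x_{2j}-\ell, x_{2j+1}, x_{2j+2},\ldots]. \]
   Context: $[a_1,a_2,a_3,\ldots]$ denotes the regular continued fraction $\cfrac{1}{a_1+\cfrac{1}{a_2+\cdots}}$ with positive integer digits. The Gauss map $G:[0,1]\to[0,1]$ is $G(0)=0$, $G(x)=\frac1x-\lfloor\frac1x\rfloor$ for $x\neq0$, and $R:[0,1]\to[0,1]$ is defined by $R(x) = 1-G(x)$. *)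

theory Defs
  imports Complex_Main
begin

definition gauss :: "real \<Rightarrow> real" where
  "gauss x = (if x = 0 then 0 else 1 / x - of_int \<lfloor>1 / x\<rfloor>)"

definition Rmap :: "real \<Rightarrow> real" where
  "Rmap x = 1 - gauss x"

fun cf_fin :: "(nat \<Rightarrow> nat) \<Rightarrow> nat \<Rightarrow> real" where
  "cf_fin a 0 = 0"
| "cf_fin a (Suc n) = 1 / (real (a 0) + cf_fin (\<lambda>k. a (Suc k)) n)"

text \<open>Value of the infinite regular continued fraction [a 0, a 1, a 2, ...]
  (digits indexed from 0 here), as the limit of its convergents.\<close>
definition cfrac :: "(nat \<Rightarrow> nat) \<Rightarrow> real" where
  "cfrac a = lim (\<lambda>n. cf_fin a n)"

end

theory Submission imports Defs begin

text \<open>Write \<open>t = [a\<^sub>2, a\<^sub>3, \<dots>]\<close>, so that \<open>G [a\<^sub>0, a\<^sub>1, a\<^sub>2, \<dots>] = 1/(a\<^sub>1 + t)\<close>.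
  If \<open>a\<^sub>1 \<ge> 2\<close> then \<open>1 - 1/(a\<^sub>1 + t) = [1, a\<^sub>1 - 1, a\<^sub>2, \<dots>]\<close>, and if \<open>a\<^sub>1 = 1\<close> then
  \<open>1 - 1/(1 + t) = 1/(1 + 1/t) = [a\<^sub>2 + 1, a\<^sub>3, \<dots>]\<close>. Hence \<open>R\<close> lowers the second digit
  by one at each step and after \<open>a\<^sub>1\<close> steps absorbs it into the third; iterating this over
  the even-indexed digits gives both formulas. The only analysis needed is that continued
  fractions with positive digits converge and satisfy \<open>[a\<^sub>0, a\<^sub>1, \<dots>] = 1/(a\<^sub>0 + [a\<^sub>1, \<dots>])\<close>;
  convergence holds because two steps of \<open>y \<mapsto> 1/(a + y)\<close> contract \<open>[0, \<infinity>)\<close> by a factor 4.\<close>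

fun cf_tail :: "(nat \<Rightarrow> nat) \<Rightarrow> nat \<Rightarrow> real \<Rightarrow> real" where
  "cf_tail a 0 y = y"
| "cf_tail a (Suc n) y = 1 / (real (a 0) + cf_tail (\<lambda>k. a (Suc k)) n y)"

lemma cf_fin_eq_cf_tail: "cf_fin a n = cf_tail a n 0"
  by (induction n arbitrary: a) auto

lemma cf_tail_nonneg: "y \<ge> 0 \<Longrightarrow> cf_tail a n y \<ge> 0"
  by (induction n arbitrary: a) auto

lemma cf_tail_le_1:
  assumes "\<And>k. a k > 0" "0 \<le> y" "y \<le> 1"
  shows "cf_tail a n y \<le> 1"
  using assms
proof (induction n arbitrary: a)
  case (Suc n)
  have "real (a 0) \<ge> 1" using Suc.prems(1)[of 0] by linarith
  moreover have "cf_tail (\<lambda>k. a (Suc k)) n y \<ge> 0" using cf_tail_nonneg Suc.prems by blast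
  ultimately show ?case by simp
qed simp

lemma cf_tail_add: "cf_tail a (n + m) y = cf_tail a n (cf_tail (\<lambda>k. a (k + n)) m y)"
  by (induction n arbitrary: a) auto

lemma inverse_add_lipschitz:
  fixes a y z :: real
  assumes "a \<ge> 1" "y \<ge> 0" "z \<ge> 0"
  shows "\<bar>1/(a + y) - 1/(a + z)\<bar> \<le> \<bar>y - z\<bar>"
proof -
  have prod: "(a + y) * (a + z) \<ge> 1" using assms mult_mono[of 1 "a + y" 1 "a + z"] by simp
  have "1/(a + y) - 1/(a + z) = (z - y) / ((a + y) * (a + z))"
    using assms by (simp add: field_simps)
  then have "\<bar>1/(a + y) - 1/(a + z)\<bar> = \<bar>y - z\<bar> / ((a + y) * (a + z))"
    using prod by (simp add: abs_minus_commute)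
  also have "\<dots> \<le> \<bar>y - z\<bar>" using prod by (simp add: divide_le_eq mult_le_cancel_left1)
  finally show ?thesis .
qed

lemma inverse_add_twice_contraction:
  fixes a b y z :: real
  assumes "a \<ge> 1" "b \<ge> 1" "y \<ge> 0" "z \<ge> 0"
  shows "\<bar>1/(a + 1/(b + y)) - 1/(a + 1/(b + z))\<bar> \<le> \<bar>y - z\<bar> / 4"
proof -
  have y: "a * (b + y) + 1 \<ge> 2" and z: "a * (b + z) + 1 \<ge> 2"
    using assms mult_mono[of 1 a 1 "b + y"] mult_mono[of 1 a 1 "b + z"] by simp_all
  then have "1/(a + 1/(b + y)) - 1/(a + 1/(b + z)) = (y - z) / ((a * (b + y) + 1) * (a * (b + z) + 1))"
    using assms by (simp add: field_simps)
  moreover have denom: "(a * (b + y) + 1) * (a * (b + z) + 1) \<ge> 4"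
    using mult_mono[OF y z] y by simp
  ultimately have "\<bar>1/(a + 1/(b + y)) - 1/(a + 1/(b + z))\<bar>
      = \<bar>y - z\<bar> / ((a * (b + y) + 1) * (a * (b + z) + 1))"
    by (simp add: abs_divide)
  also have "\<dots> \<le> \<bar>y - z\<bar> / 4" using denom by (intro divide_left_mono) auto
  finally show ?thesis .
qed

lemma cf_tail_lipschitz:
  assumes "\<And>k. a k > 0" "y \<ge> 0" "z \<ge> 0"
  shows "\<bar>cf_tail a n y - cf_tail a n z\<bar> \<le> 2 * (1/2)^n * \<bar>y - z\<bar>"
  using assms(1)
proof (induction n arbitrary: a rule: induct_nat_012)
  case 1
  have "real (a 0) \<ge> 1" using "1"[of 0] by linarith
  then show ?case using inverse_add_lipschitz assms(2,3) by simp
next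
  case (ge2 n)
  let ?b = "\<lambda>k. a (Suc (Suc k))"
  have "real (a 0) \<ge> 1" "real (a 1) \<ge> 1" using ge2.prems[of 0] ge2.prems[of 1] by linarith+
  then have "\<bar>cf_tail a (Suc (Suc n)) y - cf_tail a (Suc (Suc n)) z\<bar>
      \<le> \<bar>cf_tail ?b n y - cf_tail ?b n z\<bar> / 4"
    using inverse_add_twice_contraction cf_tail_nonneg assms(2,3) by simp
  also have "\<dots> \<le> 2 * (1/2)^n * \<bar>y - z\<bar> / 4"
    using ge2.IH(1)[of ?b] ge2.prems by (intro divide_right_mono) auto
  also have "\<dots> = 2 * (1/2)^(Suc (Suc n)) * \<bar>y - z\<bar>" by simp
  finally show ?case .
qed simp

lemma convergent_cf_fin:
  assumes pos: "\<And>k. a k > 0"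
  shows "convergent (cf_fin a)"
proof -
  have "Cauchy (cf_fin a)"
    unfolding Cauchy_altdef2
  proof (intro allI impI)
    fix e :: real assume "e > 0"
    then obtain N where N: "(1/2::real)^N < e/2" using real_arch_pow_inv[of "e/2" "1/2::real"] by auto
    have "dist (cf_fin a (N + d)) (cf_fin a N) < e" for d
    proof -
      define w where "w = cf_tail (\<lambda>k. a (k + N)) d 0"
      have w: "0 \<le> w" "w \<le> 1" unfolding w_def using cf_tail_nonneg cf_tail_le_1 pos by auto
      have "dist (cf_fin a (N + d)) (cf_fin a N) = \<bar>cf_tail a N w - cf_tail a N 0\<bar>"
        by (simp add: cf_fin_eq_cf_tail cf_tail_add w_def dist_real_def)
      also have "\<dots> \<le> 2 * (1/2)^N * \<bar>w - 0\<bar>" using cf_tail_lipschitz pos w by blast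
      also have "\<dots> \<le> 2 * (1/2)^N" using w by simp
      also have "\<dots> < e" using N by simp
      finally show ?thesis .
    qed
    then show "\<exists>N. \<forall>n\<ge>N. dist (cf_fin a n) (cf_fin a N) < e"
      using le_Suc_ex by blast
  qed
  then show ?thesis by (simp add: Cauchy_convergent_iff)
qed

lemma cf_fin_LIMSEQ_cfrac:
  assumes "\<And>k. a k > 0"
  shows "cf_fin a \<longlonglongrightarrow> cfrac a"
  unfolding cfrac_def using convergent_cf_fin[OF assms] by (simp add: convergent_LIMSEQ_iff)

lemma cfrac_nonneg:
  assumes "\<And>k. a k > 0"
  shows "cfrac a \<ge> 0"
  using LIMSEQ_le_const[OF cf_fin_LIMSEQ_cfrac[OF assms]]
  by (simp add: cf_fin_eq_cf_tail cf_tail_nonneg)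

lemma cfrac_Cons:
  assumes pos: "\<And>k. a k > 0"
  shows "cfrac a = 1 / (real (a 0) + cfrac (\<lambda>k. a (Suc k)))"
proof -
  have tail: "cf_fin (\<lambda>k. a (Suc k)) \<longlonglongrightarrow> cfrac (\<lambda>k. a (Suc k))"
    by (rule cf_fin_LIMSEQ_cfrac) (rule pos)
  have "cfrac (\<lambda>k. a (Suc k)) \<ge> 0" by (rule cfrac_nonneg) (rule pos)
  then have "real (a 0) + cfrac (\<lambda>k. a (Suc k)) \<noteq> 0" using pos[of 0] by linarith
  from tendsto_divide[OF tendsto_const tendsto_add[OF tendsto_const tail] this]
  have "(\<lambda>n. cf_fin a (Suc n)) \<longlonglongrightarrow> 1 / (real (a 0) + cfrac (\<lambda>k. a (Suc k)))"
    by simp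
  then show ?thesis
    unfolding cfrac_def by (rule limI[OF LIMSEQ_imp_Suc])
qed

lemma cfrac_pos:
  assumes "\<And>k. a k > 0"
  shows "cfrac a > 0"
proof -
  have "cfrac (\<lambda>k. a (Suc k)) \<ge> 0" by (rule cfrac_nonneg) (rule assms)
  then have "real (a 0) + cfrac (\<lambda>k. a (Suc k)) > 0" using assms[of 0] by linarith
  then show ?thesis by (subst cfrac_Cons[OF assms]) simp
qed

lemma cfrac_less_1:
  assumes "\<And>k. a k > 0"
  shows "cfrac a < 1"
proof -
  have "cfrac (\<lambda>k. a (Suc k)) > 0" by (rule cfrac_pos) (rule assms)
  then have "real (a 0) + cfrac (\<lambda>k. a (Suc k)) > 1" using assms[of 0] by linarith
  then show ?thesis by (subst cfrac_Cons[OF assms]) simp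
qed

lemma gauss_cfrac:
  assumes pos: "\<And>k. a k > 0"
  shows "gauss (cfrac a) = cfrac (\<lambda>k. a (Suc k))"
proof -
  define t where "t = cfrac (\<lambda>k. a (Suc k))"
  have t: "0 < t" "t < 1" unfolding t_def by (rule cfrac_pos cfrac_less_1, rule pos)+
  have "cfrac a = 1 / (real (a 0) + t)" unfolding t_def by (rule cfrac_Cons[OF pos])
  then have inverse: "1 / cfrac a = real (a 0) + t" and "cfrac a \<noteq> 0"
    using t by simp_all
  have "\<lfloor>real (a 0) + t\<rfloor> = int (a 0)" using t by (simp add: floor_eq_iff)
  with inverse \<open>cfrac a \<noteq> 0\<close> have "gauss (cfrac a) = t" by (simp add: gauss_def)
  then show ?thesis unfolding t_def .
qed

lemma Rmap_cfrac:
  assumes "\<And>k. a k > 0"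
  shows "Rmap (cfrac a) = 1 - 1 / (real (a 1) + cfrac (\<lambda>k. a (Suc (Suc k))))"
  using assms by (simp add: Rmap_def gauss_cfrac cfrac_Cons[of "\<lambda>k. a (Suc k)"])

lemma Rmap_cfrac_second_digit_ge_2:
  assumes pos: "\<And>k. a k > 0" and two: "a 1 \<ge> 2"
  shows "Rmap (cfrac a) = cfrac (\<lambda>k. if k = 0 then 1 else if k = 1 then a 1 - 1 else a k)"
    (is "_ = cfrac ?c")
proof -
  define t where "t = cfrac (\<lambda>k. a (Suc (Suc k)))"
  have "t \<ge> 0" unfolding t_def by (rule cfrac_nonneg) (rule pos)
  have c_pos: "?c k > 0" "(\<lambda>k. ?c (Suc k)) k > 0" for k using pos two by auto
  have "cfrac ?c = 1 / (1 + 1 / (real (a 1 - 1) + t))"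
    unfolding cfrac_Cons[of ?c, OF c_pos(1)] cfrac_Cons[of "\<lambda>k. ?c (Suc k)", OF c_pos(2)]
    by (simp add: t_def)
  also have "\<dots> = 1 - 1 / (real (a 1) + t)"
    using two \<open>t \<ge> 0\<close> by (simp add: of_nat_diff field_simps)
  finally show ?thesis unfolding Rmap_cfrac[OF pos] t_def ..
qed

lemma Rmap_cfrac_second_digit_eq_1:
  assumes pos: "\<And>k. a k > 0" and one: "a 1 = 1"
  shows "Rmap (cfrac a) = cfrac (\<lambda>k. if k = 0 then a 2 + 1 else a (k + 2))"
    (is "_ = cfrac ?d")
proof -
  define u where "u = cfrac (\<lambda>k. a (Suc (Suc (Suc k))))"
  have "u \<ge> 0" unfolding u_def by (rule cfrac_nonneg) (rule pos)
  have d_pos: "?d k > 0" for k using pos by simp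
  have tail_pos: "a (Suc (Suc k)) > 0" for k using pos by simp
  have "cfrac ?d = 1 / (real (a 2) + 1 + u)"
    unfolding cfrac_Cons[of ?d, OF d_pos] by (simp add: u_def)
  also have "\<dots> = 1 - 1 / (1 + 1 / (real (a 2) + u))"
    using \<open>u \<ge> 0\<close> pos[of 2] by (simp add: field_simps add_pos_nonneg)
  also have "1 / (real (a 2) + u) = cfrac (\<lambda>k. a (Suc (Suc k)))"
    unfolding cfrac_Cons[of "\<lambda>k. a (Suc (Suc k))", OF tail_pos]
    by (simp add: u_def numeral_2_eq_2)
  finally show ?thesis unfolding Rmap_cfrac[OF pos] one by simp
qed

lemma funpow_Rmap_cfrac_lower_second_digit:
  assumes pos: "\<And>k. a k > 0"
  shows "0 < l \<Longrightarrow> l < a 1 \<Longrightarrow>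
    (Rmap ^^ l) (cfrac a) = cfrac (\<lambda>k. if k = 0 then 1 else if k = 1 then a 1 - l else a k)"
proof (induction l)
  case (Suc l)
  show ?case
  proof (cases "l = 0")
    case True
    then show ?thesis using Rmap_cfrac_second_digit_ge_2[of a, OF pos] Suc.prems
      by (simp cong: if_cong)
  next
    case False
    let ?c = "\<lambda>k. if k = 0 then 1 else if k = 1 then a 1 - l else a k"
    have "(Rmap ^^ Suc l) (cfrac a) = Rmap (cfrac ?c)" using Suc False by simp
    also have "\<dots> = cfrac (\<lambda>k. if k = 0 then 1 else if k = 1 then ?c 1 - 1 else ?c k)"
      by (rule Rmap_cfrac_second_digit_ge_2) (use pos Suc.prems in auto)
    finally show ?thesis by (simp cong: if_cong)
  qed
qed simp

lemma funpow_Rmap_cfrac_absorb_second_digit: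
  assumes pos: "\<And>k. a k > 0"
  shows "(Rmap ^^ a 1) (cfrac a) = cfrac (\<lambda>k. if k = 0 then a 2 + 1 else a (k + 2))"
proof (cases "a 1 = 1")
  case True
  then show ?thesis using Rmap_cfrac_second_digit_eq_1[OF pos] by simp
next
  case False
  then obtain m where m: "a 1 = Suc m" "m > 0" using pos[of 1] by (cases "a 1") auto
  let ?c = "\<lambda>k. if k = 0 then 1 else if k = 1 then a 1 - m else a k"
  have "(Rmap ^^ a 1) (cfrac a) = Rmap (cfrac ?c)"
    using funpow_Rmap_cfrac_lower_second_digit[OF pos, of m] m by simp
  also have "\<dots> = cfrac (\<lambda>k. if k = 0 then ?c 2 + 1 else ?c (k + 2))"
    by (rule Rmap_cfrac_second_digit_eq_1) (use pos m in auto)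
  finally show ?thesis by (simp cong: if_cong)
qed

lemma funpow_Rmap_cfrac_even_digit_sum:
  fixes xs :: "nat \<Rightarrow> nat"
  assumes pos: "\<And>k. k \<ge> 1 \<Longrightarrow> xs k > 0"
  shows "(Rmap ^^ (\<Sum>i=1..j. xs (2*i))) (cfrac (\<lambda>k. xs (Suc k)))
    = cfrac (\<lambda>k. if k = 0 then (if j = 0 then xs 1 else xs (2*j+1) + 1) else xs (2*j+1+k))"
proof (induction j)
  case 0
  have "(\<lambda>k. xs (Suc k)) = (\<lambda>k. if k = 0 then xs 1 else xs (2*0+1+k))" by auto
  then show ?case by simp
next
  case (Suc j)
  let ?a = "\<lambda>k. if k = 0 then (if j = 0 then xs 1 else xs (2*j+1) + 1) else xs (2*j+1+k)"
  have "(\<Sum>i=1..Suc j. xs (2*i)) = ?a 1 + (\<Sum>i=1..j. xs (2*i))" by simp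
  then have "(Rmap ^^ (\<Sum>i=1..Suc j. xs (2*i))) (cfrac (\<lambda>k. xs (Suc k)))
      = (Rmap ^^ ?a 1) (cfrac ?a)"
    by (simp only: funpow_add o_apply Suc.IH)
  also have "\<dots> = cfrac (\<lambda>k. if k = 0 then ?a 2 + 1 else ?a (k + 2))"
    by (rule funpow_Rmap_cfrac_absorb_second_digit) (use pos in simp)
  finally show ?case by (simp cong: if_cong)
qed

theorem lemma3p2:
  fixes x :: real and xs :: "nat \<Rightarrow> nat" and j :: nat
  assumes pos: "\<And>k. k \<ge> 1 \<Longrightarrow> xs k > 0"
    and expn: "x = cfrac (\<lambda>k. xs (Suc k))"
    and j: "j \<ge> 1"
  shows "(Rmap ^^ (\<Sum>i=1..j. xs (2*i))) x
           = cfrac (\<lambda>k. if k = 0 then xs (2*j+1) + 1 else xs (2*j+1+k))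
       \<and> (\<forall>l. 0 < l \<and> l < xs (2*j) \<longrightarrow>
           (Rmap ^^ ((\<Sum>i=1..j-1. xs (2*i)) + l)) x
           = cfrac (\<lambda>k. if k = 0 then 1 else if k = 1 then xs (2*j) - l
                         else xs (2*j+k-1)))"
proof (intro conjI allI impI)
  show "(Rmap ^^ (\<Sum>i=1..j. xs (2*i))) x
      = cfrac (\<lambda>k. if k = 0 then xs (2*j+1) + 1 else xs (2*j+1+k))"
    using funpow_Rmap_cfrac_even_digit_sum[where xs = xs and j = j, OF pos] expn j by simp
next
  fix l assume l: "0 < l \<and> l < xs (2*j)"
  obtain n where n: "j = Suc n" using j by (cases j) auto
  let ?a = "\<lambda>k. if k = 0 then (if n = 0 then xs 1 else xs (2*n+1) + 1) else xs (2*n+1+k)"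
  have "(Rmap ^^ ((\<Sum>i=1..j-1. xs (2*i)) + l)) x = (Rmap ^^ l) (cfrac ?a)"
    using funpow_Rmap_cfrac_even_digit_sum[where xs = xs and j = n, OF pos] expn n
    by (simp add: funpow_add add.commute[of _ l])
  also have "\<dots> = cfrac (\<lambda>k. if k = 0 then 1 else if k = 1 then ?a 1 - l else ?a k)"
    by (rule funpow_Rmap_cfrac_lower_second_digit) (use pos l n in auto)
  finally show "(Rmap ^^ ((\<Sum>i=1..j-1. xs (2*i)) + l)) x
      = cfrac (\<lambda>k. if k = 0 then 1 else if k = 1 then xs (2*j) - l else xs (2*j+k-1))"
    using n by (simp cong: if_cong)
qed

end
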